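(* There exists a subset $\mathcal{A}\subseteq\mathbb{Z}$ which is not recursively enumerable but is determinable in finite quotients of $\mathbb{Z}$.
   Context: A subset $A$ of a finitely generated group $G$ is determinable in finite quotients of $G$ if there is an algorithm which, given a surjective homomorphism $\phi$ from $G$ onto a finite group $F$, decides membership in $\phi(A)\subseteq F$. For $G=\mathbb{Z}$ this amounts to an algorithm which, given $n\geq 1$, computes $\mathcal{A}\bmod n=\{r\in\{0,\dots,n-1\}:\exists a\in\mathcal{A},\ a\equiv r\bmod n\}$. *)

theory Defs
  imports Main "HOL-Library.Nat_Bijection"
begin

text \<open>Partial recursive functions (Kleene), as the model of "algorithm".\<close>

datatype recf =
    Zero
  | Succ
  | Proj nat
  | Comp recf "recf list"
  | Prim recf recf
  | Mini recf

inductive eval :: "recf \<Rightarrow> nat list \<Rightarrow> nat \<Rightarrow> bool" where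
  eval_Zero: "eval Zero xs 0"
| eval_Succ: "eval Succ (x # xs) (Suc x)"
| eval_Proj: "i < length xs \<Longrightarrow> eval (Proj i) xs (xs ! i)"
| eval_Comp: "list_all2 (\<lambda>g y. eval g xs y) gs ys \<Longrightarrow> eval f ys z \<Longrightarrow> eval (Comp f gs) xs z"
| eval_Prim0: "eval f xs y \<Longrightarrow> eval (Prim f g) (0 # xs) y"
| eval_PrimS: "eval (Prim f g) (n # xs) y \<Longrightarrow> eval g (n # y # xs) z \<Longrightarrow> eval (Prim f g) (Suc n # xs) z"
| eval_Mini: "eval f (n # xs) 0 \<Longrightarrow> (\<forall>m<n. \<exists>y. eval f (m # xs) (Suc y)) \<Longrightarrow> eval (Mini f) xs n"

definition re_nat :: "nat set \<Rightarrow> bool" where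
  "re_nat S \<longleftrightarrow> (\<exists>f. \<forall>x. x \<in> S \<longleftrightarrow> (\<exists>y. eval f [x] y))"

definition re_int :: "int set \<Rightarrow> bool" where
  "re_int A \<longleftrightarrow> re_nat (int_encode ` A)"

definition mod_set :: "int set \<Rightarrow> nat \<Rightarrow> nat set" where
  "mod_set A n = {r. r < n \<and> (\<exists>a\<in>A. a mod int n = int r)}"

definition determinable_Z :: "int set \<Rightarrow> bool" where
  "determinable_Z A \<longleftrightarrow> (\<exists>d. \<forall>n r. 1 \<le> n \<longrightarrow> r < n \<longrightarrow>
       eval d [n, r] (if r \<in> mod_set A n then 1 else 0))"

end

theory Submission
  imports Defs "HOL-Library.Countable"
begin

text \<open>Take \<open>A = {x. x < 0} \<union> T\<close> with \<open>T \<subseteq> \<nat>\<close> not recursively enumerable. Every residue class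
  modulo \<open>n\<close> contains a negative integer, so \<open>A mod n\<close> is all of \<open>{0..n-1}\<close> and the constant
  function 1 decides it; yet \<open>A\<close> is not r.e., because \<open>T\<close> is chosen by diagonalising against
  an enumeration of all programs, evaluated at the codes of the naturals.\<close>

instance recf :: countable by countable_datatype

lemma re_nat_diagonalization:
  fixes h :: "nat \<Rightarrow> nat"
  shows "\<exists>T. \<forall>S. re_nat S \<longrightarrow> (\<exists>m. h m \<in> S \<longleftrightarrow> m \<notin> T)"
proof
  let ?T = "{m. \<not> (\<exists>y. eval (from_nat m) [h m] y)}"
  show "\<forall>S. re_nat S \<longrightarrow> (\<exists>m. h m \<in> S \<longleftrightarrow> m \<notin> ?T)"
  proof (intro allI impI)
    fix S assume "re_nat S"
    then obtain f where f: "\<And>x. x \<in> S \<longleftrightarrow> (\<exists>y. eval f [x] y)"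
      by (auto simp: re_nat_def)
    have "h (to_nat f) \<in> S \<longleftrightarrow> to_nat f \<notin> ?T"
      by (simp add: f)
    then show "\<exists>m. h m \<in> S \<longleftrightarrow> m \<notin> ?T" ..
  qed
qed

lemma mod_set_eq_lessThan:
  assumes "{x. x < 0} \<subseteq> A"
  shows "mod_set A n = {..<n}"
proof -
  have "\<exists>a\<in>A. a mod int n = int r" if "r < n" for r
  proof
    show "int r - int n \<in> A" using that assms by auto
    show "(int r - int n) mod int n = int r" using that
      by (simp add: mod_diff_right_eq[symmetric])
  qed
  then show ?thesis by (auto simp: mod_set_def)
qed

lemma eval_const_one: "eval (Comp Succ [Zero]) xs 1"
proof (rule eval_Comp)
  show "list_all2 (\<lambda>g y. eval g xs y) [Zero] [0]" by (simp add: eval_Zero)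
  show "eval Succ [0] 1" using eval_Succ[of 0 "[]"] by simp
qed

lemma determinable_Z_if_mod_set_full:
  assumes "\<And>n. 1 \<le> n \<Longrightarrow> mod_set A n = {..<n}"
  shows "determinable_Z A"
  unfolding determinable_Z_def
  using assms eval_const_one by auto

theorem mainTheorem5:
  shows "\<exists>A :: int set. \<not> re_int A \<and> determinable_Z A"
proof -
  obtain T where T: "\<And>S. re_nat S \<Longrightarrow> \<exists>m. int_encode (int m) \<in> S \<longleftrightarrow> m \<notin> T"
    using re_nat_diagonalization[of "\<lambda>m. int_encode (int m)"] by blast
  define A where "A = {x. x < 0} \<union> int ` T"
  have "int_encode (int m) \<in> int_encode ` A \<longleftrightarrow> m \<in> T" for m
  proof -
    have "int_encode (int m) \<in> int_encode ` A \<longleftrightarrow> int m \<in> A"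
      using inj_int_encode by (simp add: inj_image_mem_iff)
    also have "\<dots> \<longleftrightarrow> m \<in> T" by (auto simp: A_def)
    finally show ?thesis .
  qed
  then have "\<not> re_int A"
    unfolding re_int_def using T by blast
  moreover have "determinable_Z A"
    by (rule determinable_Z_if_mod_set_full) (rule mod_set_eq_lessThan, simp add: A_def)
  ultimately show ?thesis by blast
qed

end
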